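(* Let $C\in\mathbb{R}^{n\times m}$ with $n\ge 2$ be such that the DSR graph $G_{C,C^t}$ is acyclic (has no cycles). Then for every $A\in\mathcal{Q}_0(C)$ and every $B\in\mathcal{Q}_0(C^t)$, both $AB$ and $(AB)^{[2]}$ are $P_0$-matrices, and $AB$ is positive semistable.
   Context: For $M\in\mathbb{R}^{n\times m}$, $\mathcal{Q}(M)$ is the set of matrices with the same entrywise sign pattern as $M$, and $\mathcal{Q}_0(M)$ its closure. A square real matrix is a $P_0$-matrix if all principal minors are nonnegative; positive semistable if all eigenvalues have nonnegative real part. $M^{[2]}$ denotes the second additive compound of a square matrix $M$: the matrix of $u\wedge v\mapsto Mu\wedge v+u\wedge Mv$ on $\Lambda^2\mathbb{R}^n$ in the lexicographically ordered basis $e_i\wedge e_j$, $i<j$. DSR graph: for $A\in\mathbb{R}^{n\times m}$, $B\in\mathbb{R}^{m\times n}$, $G_{A,B}$ is the signed bipartite digraph with S-vertices $S_1,\dots,S_n$, R-vertices $R_1,\dots,R_m$, an arc $R_j\to S_i$ of sign $\mathrm{sign}(A_{ij})$ iff $A_{ij}\ne0$ and an arc $S_i\to R_j$ of sign $\mathrm{sign}(B_{ji})$ iff $B_{ji}\ne 0$, where antiparallel arcs of the same sign are merged into a single undirected edge. A cycle is a nonempty closed walk (traversing edges consistently with orientation) that repeats no vertex except first$=$last; a cycle of length 2 occurs only when two distinct (non-merged) arcs join the same pair of vertices. For $G_{C,C^t}$ all edges are undirected, so acyclicity means the underlying simple graph is a forest. *)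

theory Defs
  imports "Jordan_Normal_Form.DL_Rank_Submatrix" "Jordan_Normal_Form.Char_Poly"
begin

definition Q0 :: "real mat \<Rightarrow> real mat set" where
  "Q0 C = {A. A \<in> carrier_mat (dim_row C) (dim_col C) \<and>
              (\<forall>i<dim_row C. \<forall>j<dim_col C. sgn (A $$ (i,j)) \<in> {0, sgn (C $$ (i,j))})}"

definition P0_matrix :: "real mat \<Rightarrow> bool" where
  "P0_matrix M \<longleftrightarrow> square_mat M \<and>
     (\<forall>I. I \<subseteq> {0..<dim_row M} \<longrightarrow> I \<noteq> {} \<longrightarrow> det (submatrix M I I) \<ge> 0)"

definition positive_semistable :: "real mat \<Rightarrow> bool" where
  "positive_semistable M \<longleftrightarrow> square_mat M \<and>
     (\<forall>z. eigenvalue (map_mat complex_of_real M) z \<longrightarrow> Re z \<ge> 0)"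

(* lexicographically ordered basis e_i \<and> e_j, i < j, of \<Lambda>^2 R^n *)
definition wedge_pairs :: "nat \<Rightarrow> (nat \<times> nat) list" where
  "wedge_pairs n = [(i,j). i \<leftarrow> [0..<n], j \<leftarrow> [Suc i..<n]]"

(* Second additive compound: matrix of u\<and>v \<mapsto> Mu\<and>v + u\<and>Mv in the basis above.
   The coefficient of e_i\<and>e_j in M e_k\<and>e_l + e_k\<and>M e_l (i<j, k<l) is
   [l=j] M_ik - [l=i] M_jk + [k=i] M_jl - [k=j] M_il. *)
definition compound2 :: "real mat \<Rightarrow> real mat" where
  "compound2 M = (let n = dim_row M; ps = wedge_pairs n; N = length ps in
     mat N N (\<lambda>(r,c). case ps ! r of (i,j) \<Rightarrow> case ps ! c of (k,l) \<Rightarrow>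
        (if l = j then M $$ (i,k) else 0) - (if l = i then M $$ (j,k) else 0)
      + (if k = i then M $$ (j,l) else 0) - (if k = j then M $$ (i,l) else 0)))"

(* DSR graph G_{C,C^t}: vertices S_i = Inl i (i<n), R_j = Inr j (j<m);
   all edges are undirected (merged antiparallel arcs of equal sign), with
   S_i -- R_j iff C_ij \<noteq> 0. *)
definition dsr_vertices :: "real mat \<Rightarrow> (nat + nat) set" where
  "dsr_vertices C = Inl ` {0..<dim_row C} \<union> Inr ` {0..<dim_col C}"

definition dsr_adj :: "real mat \<Rightarrow> nat + nat \<Rightarrow> nat + nat \<Rightarrow> bool" where
  "dsr_adj C u v \<longleftrightarrow> (\<exists>i j. i < dim_row C \<and> j < dim_col C \<and> C $$ (i,j) \<noteq> 0 \<and>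
       ((u = Inl i \<and> v = Inr j) \<or> (u = Inr j \<and> v = Inl i)))"

(* Since each undirected edge is a single edge, a cycle traverses
   distinct edges, so k \<ge> 3 (a back-and-forth along one edge is not a cycle). *)
definition dsr_cycle :: "real mat \<Rightarrow> (nat + nat) list \<Rightarrow> bool" where
  "dsr_cycle C vs \<longleftrightarrow> length vs \<ge> 3 \<and> distinct vs \<and> set vs \<subseteq> dsr_vertices C \<and>
     (\<forall>t < length vs. dsr_adj C (vs ! t) (vs ! ((Suc t) mod length vs)))"

definition dsr_acyclic :: "real mat \<Rightarrow> bool" where
  "dsr_acyclic C \<longleftrightarrow> \<not> (\<exists>vs. dsr_cycle C vs)"

end

theory Submission
  imports Defs
begin

text \<open>
  For \<open>\<epsilon> > 0\<close> the matrices \<open>A + \<epsilon> C\<close> and \<open>B + \<epsilon> C\<^sup>T\<close> have exactly the sign patterns of \<open>C\<close>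
  and \<open>C\<^sup>T\<close>. As the DSR graph is a forest, positive vertex weights can be chosen with
  \<open>d\<^sub>i e\<^sub>j = B\<^sub>j\<^sub>i / A\<^sub>i\<^sub>j\<close> along every edge, i.e. \<open>B = E A\<^sup>T D\<close> with \<open>D\<close>, \<open>E\<close> positive diagonal.
  Then \<open>AB = (A E A\<^sup>T) D\<close> and its second additive compound are both of the form \<open>G D\<close> with
  \<open>G\<close> positive semidefinite and \<open>D\<close> positive diagonal. This class is closed under principal
  submatrices and has real nonnegative spectra, so its members are \<open>P\<^sub>0\<close> and positive
  semistable. Both properties survive entrywise limits (determinants are continuous, and
  \<open>|det (M - z I)| \<ge> (- Re z)\<^sup>k\<close> if all eigenvalues of \<open>M\<close> have nonnegative real part),
  so letting \<open>\<epsilon> \<rightarrow> 0\<close> proves the theorem.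
\<close>

section \<open>Forests and diagonal scaling\<close>

lemma dsr_adj_sym: "dsr_adj C u v \<longleftrightarrow> dsr_adj C v u"
  unfolding dsr_adj_def by blast

lemma dsr_adj_irrefl: "\<not> dsr_adj C v v"
  unfolding dsr_adj_def by auto

definition dsr_path :: "real mat \<Rightarrow> (nat + nat) set \<Rightarrow> (nat + nat) list \<Rightarrow> bool" where
  "dsr_path C W xs \<longleftrightarrow> xs \<noteq> [] \<and> distinct xs \<and> set xs \<subseteq> W \<and>
     (\<forall>t. Suc t < length xs \<longrightarrow> dsr_adj C (xs ! t) (xs ! Suc t))"

lemma dsr_path_snoc:
  assumes "dsr_path C W xs" "y \<in> W" "y \<notin> set xs" "dsr_adj C (last xs) y"
  shows "dsr_path C W (xs @ [y])"
proof -
  have "dsr_adj C ((xs @ [y]) ! t) ((xs @ [y]) ! Suc t)" if "Suc t < length (xs @ [y])" for t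
  proof (cases "Suc t < length xs")
    case True
    then show ?thesis using assms(1) unfolding dsr_path_def by (simp add: nth_append)
  next
    case False
    then have "t = length xs - 1" using that by simp
    then show ?thesis using assms(1,4) unfolding dsr_path_def by (simp add: nth_append last_conv_nth)
  qed
  then show ?thesis using assms unfolding dsr_path_def by auto
qed

lemma dsr_cycle_drop_path:
  assumes path: "dsr_path C W xs" and W: "W \<subseteq> dsr_vertices C"
    and i: "i + 3 \<le> length xs" and closing: "dsr_adj C (last xs) (xs ! i)"
  shows "dsr_cycle C (drop i xs)"
  unfolding dsr_cycle_def
proof (intro conjI allI impI)
  show "3 \<le> length (drop i xs)" "distinct (drop i xs)" "set (drop i xs) \<subseteq> dsr_vertices C"
    using path W i unfolding dsr_path_def by (auto dest: in_set_dropD)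
  fix t assume t: "t < length (drop i xs)"
  show "dsr_adj C (drop i xs ! t) (drop i xs ! (Suc t mod length (drop i xs)))"
  proof (cases "Suc t < length (drop i xs)")
    case True
    then show ?thesis using path i unfolding dsr_path_def by simp
  next
    case False
    then have "Suc t = length (drop i xs)" using t by simp
    moreover from this have "i + t = length xs - 1" by simp
    moreover have "xs \<noteq> []" using i by auto
    ultimately show ?thesis using closing by (simp add: last_conv_nth)
  qed
qed

lemma dsr_acyclic_leaf:
  assumes acyc: "dsr_acyclic C" and W: "W \<subseteq> dsr_vertices C" "W \<noteq> {}"
  shows "\<exists>v\<in>W. \<forall>u\<in>W. \<forall>w\<in>W. dsr_adj C v u \<longrightarrow> dsr_adj C v w \<longrightarrow> u = w"
proof (rule ccontr)
  assume no_leaf: "\<not> ?thesis"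
  have finW: "finite W" using W(1) unfolding dsr_vertices_def by (rule finite_subset) auto
  obtain v0 where "v0 \<in> W" using W(2) by auto
  then have "dsr_path C W [v0]" unfolding dsr_path_def by simp
  moreover have "length ys < Suc (card W)" if "dsr_path C W ys" for ys
    using that distinct_card card_mono[OF finW] unfolding dsr_path_def by (metis less_Suc_eq_le)
  ultimately obtain xs where xs: "dsr_path C W xs"
    and longest: "\<And>ys. dsr_path C W ys \<Longrightarrow> length ys \<le> length xs"
    using Lattices_Big.ex_has_greatest_nat[of "dsr_path C W" _ length "Suc (card W)"] by blast
  define L where "L = length xs"
  have "last xs \<in> W" using xs unfolding dsr_path_def by auto
  then obtain u w where uw: "u \<in> W" "w \<in> W" "dsr_adj C (last xs) u" "dsr_adj C (last xs) w" "u \<noteq> w"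
    using no_leaf by blast
  obtain y where y: "y \<in> W" "dsr_adj C (last xs) y" and not_back: "2 \<le> L \<Longrightarrow> y \<noteq> xs ! (L - 2)"
    using uw by (metis (mono_tags))
  show False
  proof (cases "y \<in> set xs")
    case False
    from longest[OF dsr_path_snoc[OF xs y(1) False y(2)]] show False by simp
  next
    case True
    then obtain i where i: "i < L" "xs ! i = y" unfolding L_def by (metis in_set_conv_nth)
    have "xs \<noteq> []" using xs unfolding dsr_path_def by simp
    then have "i \<noteq> L - 1" using i y(2) dsr_adj_irrefl unfolding L_def by (metis last_conv_nth)
    moreover have "i \<noteq> L - 2" if "2 \<le> L" using not_back[OF that] i by auto
    ultimately have "i + 3 \<le> L" using i by (cases "2 \<le> L") auto
    then have "dsr_cycle C (drop i xs)"
      using dsr_cycle_drop_path[OF xs W(1)] i y(2) unfolding L_def by simp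
    then show False using acyc unfolding dsr_acyclic_def by blast
  qed
qed

lemma forest_edge_potential:
  fixes E :: "'v \<Rightarrow> 'v \<Rightarrow> bool" and \<rho> :: "'v \<Rightarrow> 'v \<Rightarrow> real"
  assumes "finite V"
    and leaf: "\<And>W. W \<subseteq> V \<Longrightarrow> W \<noteq> {} \<Longrightarrow> \<exists>v\<in>W. \<forall>u\<in>W. \<forall>w\<in>W. E v u \<longrightarrow> E v w \<longrightarrow> u = w"
    and E_sym: "\<And>u v. E u v \<Longrightarrow> E v u" and E_irrefl: "\<And>v. \<not> E v v"
    and \<rho>_pos: "\<And>u v. E u v \<Longrightarrow> \<rho> u v > 0" and \<rho>_sym: "\<And>u v. E u v \<Longrightarrow> \<rho> u v = \<rho> v u"
  shows "\<exists>f. (\<forall>v\<in>V. f v > 0) \<and> (\<forall>u\<in>V. \<forall>v\<in>V. E u v \<longrightarrow> f u * f v = \<rho> u v)"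
  using assms(1)
proof (induction V rule: finite_remove_induct)
  case (remove A)
  obtain v where v: "v \<in> A"
    and leaf_v: "\<And>u w. u \<in> A \<Longrightarrow> w \<in> A \<Longrightarrow> E v u \<Longrightarrow> E v w \<Longrightarrow> u = w"
    using leaf[OF remove.hyps(3,2)] by blast
  obtain f where f_pos: "\<forall>x\<in>A - {v}. f x > 0"
    and f_edge: "\<forall>x\<in>A - {v}. \<forall>y\<in>A - {v}. E x y \<longrightarrow> f x * f y = \<rho> x y"
    using remove.IH[OF v] by blast
  obtain c where c: "c > 0" and c_edge: "\<And>u. u \<in> A \<Longrightarrow> E v u \<Longrightarrow> c * f u = \<rho> v u"
  proof (cases "\<exists>u\<in>A. E v u")
    case True
    then obtain u where u: "u \<in> A" "E v u" by blast
    then have "f u > 0" using f_pos E_irrefl by blast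
    show ?thesis
    proof (rule that)
      show "\<rho> v u / f u > 0" using \<rho>_pos[OF u(2)] \<open>f u > 0\<close> by simp
      show "\<rho> v u / f u * f w = \<rho> v w" if "w \<in> A" "E v w" for w
        using leaf_v[OF that(1) u(1) that(2) u(2)] \<open>f u > 0\<close> by simp
    qed
  next
    case False
    then show ?thesis using that[of 1] by auto
  qed
  define g where "g = f(v := c)"
  have "g x * g y = \<rho> x y" if "x \<in> A" "y \<in> A" "E x y" for x y
    using that f_edge c_edge[of y] c_edge[of x] E_sym \<rho>_sym E_irrefl unfolding g_def
    by (cases "x = v"; cases "y = v") (auto simp: mult.commute)
  moreover have "\<forall>x\<in>A. g x > 0" using f_pos c unfolding g_def by auto
  ultimately show ?case by blast
qed simp

lemma dsr_acyclic_diagonal_scaling: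
  assumes C: "C \<in> carrier_mat n m" and acyc: "dsr_acyclic C"
    and sign: "\<And>i j. i < n \<Longrightarrow> j < m \<Longrightarrow>
      sgn (P $$ (i,j)) = sgn (C $$ (i,j)) \<and> sgn (Q $$ (j,i)) = sgn (C $$ (i,j))"
  shows "\<exists>d e. (\<forall>i<n. d i > 0) \<and> (\<forall>j<m. e j > 0) \<and>
    (\<forall>i<n. \<forall>j<m. Q $$ (j,i) = d i * e j * P $$ (i,j))"
proof -
  define ratio where "ratio i j = Q $$ (j,i) / P $$ (i,j)" for i j
  define \<rho> where "\<rho> u v = (case (u, v) of (Inl i, Inr j) \<Rightarrow> ratio i j | (Inr j, Inl i) \<Rightarrow> ratio i j | _ \<Rightarrow> 1)"
    for u v
  have edge: "dsr_adj C u v \<longleftrightarrow> (\<exists>i<n. \<exists>j<m. C $$ (i,j) \<noteq> 0 \<and>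
      (u = Inl i \<and> v = Inr j \<or> u = Inr j \<and> v = Inl i))" for u v
    using C unfolding dsr_adj_def by auto
  have ratio_pos: "ratio i j > 0" if "i < n" "j < m" "C $$ (i,j) \<noteq> 0" for i j
    using sign[OF that(1,2)] that(3) unfolding ratio_def
    by (auto simp: sgn_if zero_less_divide_iff split: if_splits)
  have \<rho>_sym: "\<rho> u v = \<rho> v u" for u v
    unfolding \<rho>_def by (cases u; cases v) simp_all
  have \<rho>_pos: "\<rho> u v > 0" if "dsr_adj C u v" for u v
    using that ratio_pos unfolding edge \<rho>_def by auto
  have "\<exists>f. (\<forall>v\<in>dsr_vertices C. f v > 0) \<and>
      (\<forall>u\<in>dsr_vertices C. \<forall>v\<in>dsr_vertices C. dsr_adj C u v \<longrightarrow> f u * f v = \<rho> u v)"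
  proof (rule forest_edge_potential)
    show "finite (dsr_vertices C)" unfolding dsr_vertices_def by simp
    show "\<exists>v\<in>W. \<forall>u\<in>W. \<forall>w\<in>W. dsr_adj C v u \<longrightarrow> dsr_adj C v w \<longrightarrow> u = w"
      if "W \<subseteq> dsr_vertices C" "W \<noteq> {}" for W
      using dsr_acyclic_leaf[OF acyc that] .
    show "dsr_adj C v u" if "dsr_adj C u v" for u v using that dsr_adj_sym by blast
  qed (use dsr_adj_irrefl \<rho>_pos \<rho>_sym in auto)
  then obtain f where f_pos: "\<forall>v\<in>dsr_vertices C. f v > 0"
    and f_edge: "\<forall>u\<in>dsr_vertices C. \<forall>v\<in>dsr_vertices C. dsr_adj C u v \<longrightarrow> f u * f v = \<rho> u v"
    by blast
  have vertices: "i < n \<Longrightarrow> Inl i \<in> dsr_vertices C" "j < m \<Longrightarrow> Inr j \<in> dsr_vertices C" for i j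
    using C unfolding dsr_vertices_def by auto
  have "Q $$ (j,i) = f (Inl i) * f (Inr j) * P $$ (i,j)" if ij: "i < n" "j < m" for i j
  proof (cases "C $$ (i,j) = 0")
    case True
    then show ?thesis using sign[OF ij] by (simp add: sgn_0_0)
  next
    case False
    then have "dsr_adj C (Inl i) (Inr j)" unfolding edge using ij by blast
    then have "f (Inl i) * f (Inr j) = \<rho> (Inl i) (Inr j)" using f_edge vertices ij by blast
    then have "f (Inl i) * f (Inr j) = ratio i j" unfolding \<rho>_def by simp
    moreover have "P $$ (i,j) \<noteq> 0" using sign[OF ij] False by (auto simp: sgn_0_0)
    ultimately show ?thesis unfolding ratio_def by simp
  qed
  then show ?thesis using f_pos vertices by (intro exI[of _ "\<lambda>i. f (Inl i)"] exI[of _ "\<lambda>j. f (Inr j)"]) auto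
qed

section \<open>Matrices with real nonnegative spectrum\<close>

lemma det_char_matrix_factorization:
  fixes N :: "complex mat"
  assumes N: "N \<in> carrier_mat k k"
  obtains as where "length as = k" "\<And>a. a \<in> set as \<Longrightarrow> eigenvalue N a"
    "\<And>z. det (char_matrix N z) = (\<Prod>a\<leftarrow>as. a - z)"
proof -
  obtain as where cp: "char_poly N = (\<Prod>a\<leftarrow>as. [:- a, 1:])" and len: "length as = k"
    using char_poly_factorized[OF N] by blast
  have poly_cp: "poly (char_poly N) z = (\<Prod>a\<leftarrow>as. z - a)" for z
    unfolding cp by (simp add: poly_prod_list o_def)
  have "eigenvalue N a" if "a \<in> set as" for a
    using that eigenvalue_root_char_poly[OF N] unfolding poly_cp by (simp add: prod_list_zero_iff)
  moreover have "det (char_matrix N z) = (\<Prod>a\<leftarrow>as. a - z)" for z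
  proof -
    have cm: "char_matrix N z \<in> carrier_mat k k" using N by simp
    then have "- char_matrix N z = (-1) \<cdot>\<^sub>m char_matrix N z" by (intro eq_matI) auto
    then have "poly (char_poly N) z = (-1) ^ k * det (char_matrix N z)"
      using cm char_poly_matrix[OF N] by simp
    moreover have "(\<Prod>a\<leftarrow>as. z - a) = (-1) ^ length as * (\<Prod>a\<leftarrow>as. a - z)"
      by (induction as) (simp_all add: algebra_simps)
    ultimately have "(-1) ^ k * det (char_matrix N z) = (-1) ^ k * (\<Prod>a\<leftarrow>as. a - z)"
      using len poly_cp by simp
    then show ?thesis by simp
  qed
  ultimately show ?thesis using len that by blast
qed

lemma det_nonneg_if_eigenvalues_nonneg_real:
  fixes M :: "real mat"
  assumes M: "M \<in> carrier_mat k k"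
    and spec: "\<And>\<mu>. eigenvalue (map_mat complex_of_real M) \<mu> \<Longrightarrow> Im \<mu> = 0 \<and> Re \<mu> \<ge> 0"
  shows "det M \<ge> 0"
proof -
  have Mc: "map_mat complex_of_real M \<in> carrier_mat k k" using M by simp
  show ?thesis
  proof (rule det_char_matrix_factorization[OF Mc])
    fix as :: "complex list"
    assume "length as = k" and as: "\<And>a. a \<in> set as \<Longrightarrow> eigenvalue (map_mat complex_of_real M) a"
      and det_cm: "\<And>z. det (char_matrix (map_mat complex_of_real M) z) = (\<Prod>a\<leftarrow>as. a - z)"
    have "char_matrix (map_mat complex_of_real M) 0 = map_mat complex_of_real M"
      using M unfolding char_matrix_def by (intro eq_matI) auto
    then have "complex_of_real (det M) = (\<Prod>a\<leftarrow>as. a)"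
      using det_cm[of 0] by (simp add: of_real_hom.hom_det)
    then have "det M = Re (\<Prod>a\<leftarrow>as. a)" by (metis Re_complex_of_real)
    moreover have "Im a = 0 \<and> Re a \<ge> 0" if "a \<in> set as" for a using spec[OF as[OF that]] .
    then have "Im (\<Prod>a\<leftarrow>as. a) = 0 \<and> Re (\<Prod>a\<leftarrow>as. a) \<ge> 0"
      by (induction as) simp_all
    ultimately show "det M \<ge> 0" by simp
  qed
qed

lemma norm_det_char_matrix_ge:
  fixes N :: "complex mat"
  assumes N: "N \<in> carrier_mat k k" and spec: "\<And>\<mu>. eigenvalue N \<mu> \<Longrightarrow> Re \<mu> \<ge> 0"
    and z: "Re z \<le> 0"
  shows "(- Re z) ^ k \<le> cmod (det (char_matrix N z))"
proof -
  obtain as where len: "length as = k" and as: "\<And>a. a \<in> set as \<Longrightarrow> eigenvalue N a"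
    and det_cm: "\<And>z. det (char_matrix N z) = (\<Prod>a\<leftarrow>as. a - z)"
    using det_char_matrix_factorization[OF N] by blast
  have "(- Re z) ^ length as \<le> cmod (\<Prod>a\<leftarrow>as. a - z)"
    using as
  proof (induction as)
    case (Cons a as)
    have "- Re z \<le> cmod (a - z)"
      using abs_Re_le_cmod[of "a - z"] spec[OF Cons.prems[of a]] by auto
    moreover have "(- Re z) ^ length as \<le> cmod (\<Prod>a\<leftarrow>as. a - z)" using Cons by simp
    ultimately have "(- Re z) * (- Re z) ^ length as \<le> cmod (a - z) * cmod (\<Prod>a\<leftarrow>as. a - z)"
      using z by (intro mult_mono) auto
    then show ?case by (simp add: norm_mult)
  qed simp
  then show ?thesis using len det_cm by simp
qed

text \<open>\<open>weighted_gram k X F w d\<close> is \<open>G D\<close> with \<open>G = F diag(w) F\<^sup>T\<close> positive semidefinite (for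
  \<open>w \<ge> 0\<close>) and \<open>D = diag(d)\<close> positive. It is similar to \<open>D^(1/2) G D^(1/2)\<close>, whence its real
  nonnegative spectrum; the quadratic form below avoids the square roots.\<close>

definition weighted_gram ::
    "nat \<Rightarrow> 'x set \<Rightarrow> (nat \<Rightarrow> 'x \<Rightarrow> real) \<Rightarrow> ('x \<Rightarrow> real) \<Rightarrow> (nat \<Rightarrow> real) \<Rightarrow> real mat" where
  "weighted_gram k X F w d = mat k k (\<lambda>(r, c). \<Sum>x\<in>X. F r x * w x * F c x * d c)"

lemma dim_weighted_gram [simp]:
  "dim_row (weighted_gram k X F w d) = k" "dim_col (weighted_gram k X F w d) = k"
  unfolding weighted_gram_def by simp_all

lemma weighted_gram_carrier [simp]: "weighted_gram k X F w d \<in> carrier_mat k k"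
  by (simp add: carrier_matI)

lemma weighted_gram_hermitian_form:
  fixes v :: "complex vec" and X :: "'x set" and F w d
  assumes v: "v \<in> carrier_vec k"
  defines "N \<equiv> map_mat complex_of_real (weighted_gram k X F w d)"
  shows "(\<Sum>r<k. complex_of_real (d r) * cnj (v $ r) * (N *\<^sub>v v) $ r)
    = complex_of_real (\<Sum>x\<in>X. w x * (cmod (\<Sum>c<k. complex_of_real (F c x * d c) * v $ c))\<^sup>2)"
proof -
  define u where "u x = (\<Sum>c<k. complex_of_real (F c x * d c) * v $ c)" for x
  have cnj_u_u: "cnj (u x) * u x = (\<Sum>r<k. \<Sum>c<k.
      (complex_of_real (F r x * d r) * cnj (v $ r)) * (complex_of_real (F c x * d c) * v $ c))" for x
    unfolding u_def by (simp add: cnj_sum sum_product)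
  have Nv: "(N *\<^sub>v v) $ r = (\<Sum>c<k. \<Sum>x\<in>X. complex_of_real (F r x * w x * F c x * d c) * v $ c)"
    if "r < k" for r
    using that v unfolding N_def weighted_gram_def
    by (auto simp: scalar_prod_def lessThan_atLeast0 of_real_sum sum_distrib_right intro!: sum.cong)
  have "(\<Sum>r<k. complex_of_real (d r) * cnj (v $ r) * (N *\<^sub>v v) $ r)
      = (\<Sum>r<k. \<Sum>c<k. \<Sum>x\<in>X. complex_of_real (w x) *
           (complex_of_real (F r x * d r) * cnj (v $ r)) * (complex_of_real (F c x * d c) * v $ c))"
    by (intro sum.cong refl) (simp add: Nv sum_distrib_left mult_ac)
  also have "\<dots> = (\<Sum>r<k. \<Sum>x\<in>X. \<Sum>c<k. complex_of_real (w x) *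
           (complex_of_real (F r x * d r) * cnj (v $ r)) * (complex_of_real (F c x * d c) * v $ c))"
    by (rule sum.cong[OF refl], rule sum.swap)
  also have "\<dots> = (\<Sum>x\<in>X. \<Sum>r<k. \<Sum>c<k. complex_of_real (w x) *
           (complex_of_real (F r x * d r) * cnj (v $ r)) * (complex_of_real (F c x * d c) * v $ c))"
    by (rule sum.swap)
  also have "\<dots> = (\<Sum>x\<in>X. complex_of_real (w x) * (cnj (u x) * u x))"
    unfolding cnj_u_u sum_distrib_left by (intro sum.cong refl) (simp add: mult_ac)
  also have "\<dots> = complex_of_real (\<Sum>x\<in>X. w x * (cmod (u x))\<^sup>2)"
    unfolding of_real_sum of_real_mult complex_norm_square by (simp add: mult_ac)
  finally show ?thesis unfolding u_def .
qed

lemma weighted_gram_eigenvalue: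
  assumes w: "\<And>x. x \<in> X \<Longrightarrow> w x \<ge> 0" and d: "\<And>r. r < k \<Longrightarrow> d r > 0"
    and ev: "eigenvalue (map_mat complex_of_real (weighted_gram k X F w d)) \<mu>"
  shows "Im \<mu> = 0 \<and> Re \<mu> \<ge> 0"
proof -
  let ?N = "map_mat complex_of_real (weighted_gram k X F w d)"
  obtain v where v: "v \<in> carrier_vec k" "v \<noteq> 0\<^sub>v k" "?N *\<^sub>v v = \<mu> \<cdot>\<^sub>v v"
    using ev unfolding eigenvalue_def eigenvector_def by auto
  define P where "P = (\<Sum>r<k. d r * (cmod (v $ r))\<^sup>2)"
  define Q where "Q = (\<Sum>x\<in>X. w x * (cmod (\<Sum>c<k. complex_of_real (F c x * d c) * v $ c))\<^sup>2)"
  have "(\<Sum>r<k. complex_of_real (d r) * cnj (v $ r) * (?N *\<^sub>v v) $ r) = \<mu> * complex_of_real P"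
    using v(1) unfolding v(3) P_def
    by (simp add: of_real_sum sum_distrib_left mult_ac flip: complex_norm_square)
  then have \<mu>P: "\<mu> * complex_of_real P = complex_of_real Q"
    unfolding Q_def weighted_gram_hermitian_form[OF v(1)] by simp
  obtain r0 where r0: "r0 < k" "v $ r0 \<noteq> 0"
    using v(1,2) by (metis eq_vecI index_zero_vec carrier_vecD)
  have "0 < d r0 * (cmod (v $ r0))\<^sup>2" using r0 d by simp
  also have "\<dots> \<le> P" unfolding P_def
    using r0 by (intro member_le_sum) (auto intro!: mult_nonneg_nonneg less_imp_le[OF d])
  finally have "P > 0" .
  moreover have "Q \<ge> 0" unfolding Q_def using w by (intro sum_nonneg) auto
  moreover have "\<mu> = complex_of_real (Q / P)" using \<mu>P \<open>P > 0\<close> by (simp add: field_simps)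
  ultimately show ?thesis by simp
qed

lemma submatrix_weighted_gram:
  "submatrix (weighted_gram k X F w d) I I
    = weighted_gram (card {i. i < k \<and> i \<in> I}) X (\<lambda>r. F (pick I r)) w (\<lambda>r. d (pick I r))"
  by (rule eq_matI) (auto simp: dim_submatrix submatrix_index weighted_gram_def pick_le)

lemma P0_matrix_weighted_gram:
  assumes "\<And>x. x \<in> X \<Longrightarrow> w x \<ge> 0" and d: "\<And>r. r < k \<Longrightarrow> d r > 0"
  shows "P0_matrix (weighted_gram k X F w d)"
  unfolding P0_matrix_def
proof (intro conjI allI impI)
  fix I
  have "\<And>r. r < card {i. i < k \<and> i \<in> I} \<Longrightarrow> d (pick I r) > 0" using d pick_le by blast
  then show "det (submatrix (weighted_gram k X F w d) I I) \<ge> 0"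
    unfolding submatrix_weighted_gram
    by (intro det_nonneg_if_eigenvalues_nonneg_real[OF weighted_gram_carrier] weighted_gram_eigenvalue)
      (use assms(1) in auto)
qed simp

lemma positive_semistable_weighted_gram:
  assumes "\<And>x. x \<in> X \<Longrightarrow> w x \<ge> 0" and "\<And>r. r < k \<Longrightarrow> d r > 0"
  shows "positive_semistable (weighted_gram k X F w d)"
  unfolding positive_semistable_def using weighted_gram_eigenvalue[of X w k d] assms by simp

section \<open>Limits of matrices\<close>

lemma tendsto_det:
  fixes f :: "'b \<Rightarrow> 'a :: real_normed_field mat"
  assumes f: "\<And>x. f x \<in> carrier_mat k k" and g: "g \<in> carrier_mat k k"
    and lim: "\<And>i j. i < k \<Longrightarrow> j < k \<Longrightarrow> ((\<lambda>x. f x $$ (i,j)) \<longlongrightarrow> g $$ (i,j)) F"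
  shows "((\<lambda>x. det (f x)) \<longlongrightarrow> det g) F"
proof -
  have "((\<lambda>x. \<Sum>p\<in>{p. p permutes {0..<k}}. signof p * (\<Prod>i = 0..<k. f x $$ (i, p i)))
     \<longlongrightarrow> (\<Sum>p\<in>{p. p permutes {0..<k}}. signof p * (\<Prod>i = 0..<k. g $$ (i, p i)))) F"
    by (intro tendsto_sum tendsto_mult tendsto_const tendsto_prod lim)
      (auto simp: permutes_in_image)
  then show ?thesis using det_def'[OF g] det_def'[OF f] by simp
qed

lemma mult_mat_index_sum:
  assumes "P \<in> carrier_mat n m" "Q \<in> carrier_mat m l" "i < n" "j < l"
  shows "(P * Q) $$ (i,j) = (\<Sum>p<m. P $$ (i,p) * Q $$ (p,j))"
  using assms by (simp add: scalar_prod_def lessThan_atLeast0)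

lemma tendsto_mult_mat_index:
  fixes Af Bf :: "'b \<Rightarrow> 'a :: real_normed_field mat"
  assumes Af: "\<And>x. Af x \<in> carrier_mat n m" and Bf: "\<And>x. Bf x \<in> carrier_mat m l"
    and A: "A \<in> carrier_mat n m" and B: "B \<in> carrier_mat m l"
    and limA: "\<And>i p. i < n \<Longrightarrow> p < m \<Longrightarrow> ((\<lambda>x. Af x $$ (i,p)) \<longlongrightarrow> A $$ (i,p)) F"
    and limB: "\<And>p j. p < m \<Longrightarrow> j < l \<Longrightarrow> ((\<lambda>x. Bf x $$ (p,j)) \<longlongrightarrow> B $$ (p,j)) F"
    and ij: "i < n" "j < l"
  shows "((\<lambda>x. (Af x * Bf x) $$ (i,j)) \<longlongrightarrow> (A * B) $$ (i,j)) F"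
proof -
  have "((\<lambda>x. \<Sum>p<m. Af x $$ (i,p) * Bf x $$ (p,j)) \<longlongrightarrow> (\<Sum>p<m. A $$ (i,p) * B $$ (p,j))) F"
    using ij by (intro tendsto_sum tendsto_mult limA limB) auto
  then show ?thesis using mult_mat_index_sum[OF Af Bf ij] mult_mat_index_sum[OF A B ij] by simp
qed

lemma P0_matrix_limit:
  fixes Mf :: "'b \<Rightarrow> real mat"
  assumes F: "F \<noteq> bot" and Mf: "\<And>x. Mf x \<in> carrier_mat k k" and M: "M \<in> carrier_mat k k"
    and lim: "\<And>i j. i < k \<Longrightarrow> j < k \<Longrightarrow> ((\<lambda>x. Mf x $$ (i,j)) \<longlongrightarrow> M $$ (i,j)) F"
    and P0: "\<forall>\<^sub>F x in F. P0_matrix (Mf x)"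
  shows "P0_matrix M"
  unfolding P0_matrix_def
proof (intro conjI allI impI)
  fix I assume I: "I \<subseteq> {0..<dim_row M}" "I \<noteq> {}"
  let ?K = "card {i. i < k \<and> i \<in> I}"
  have dim: "dim_row (Mf x) = k" "dim_col (Mf x) = k" "dim_row M = k" "dim_col M = k" for x
    using Mf[of x] M by auto
  have "submatrix (Mf x) I I \<in> carrier_mat ?K ?K" "submatrix M I I \<in> carrier_mat ?K ?K" for x
    by (simp_all add: carrier_matI dim_submatrix dim)
  moreover have "((\<lambda>x. submatrix (Mf x) I I $$ (a,b)) \<longlongrightarrow> submatrix M I I $$ (a,b)) F"
    if "a < ?K" "b < ?K" for a b
    using that lim[OF pick_le pick_le] by (simp add: submatrix_index dim)
  ultimately have "((\<lambda>x. det (submatrix (Mf x) I I)) \<longlongrightarrow> det (submatrix M I I)) F"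
    by (intro tendsto_det)
  moreover have "\<forall>\<^sub>F x in F. det (submatrix (Mf x) I I) \<ge> 0"
    using P0 by (rule eventually_mono) (use I in \<open>simp add: P0_matrix_def dim\<close>)
  ultimately show "det (submatrix M I I) \<ge> 0" using F by (intro tendsto_lowerbound)
qed (use M in simp)

lemma positive_semistable_limit:
  fixes Mf :: "'b \<Rightarrow> real mat"
  assumes F: "F \<noteq> bot" and Mf: "\<And>x. Mf x \<in> carrier_mat k k" and M: "M \<in> carrier_mat k k"
    and lim: "\<And>i j. i < k \<Longrightarrow> j < k \<Longrightarrow> ((\<lambda>x. Mf x $$ (i,j)) \<longlongrightarrow> M $$ (i,j)) F"
    and stable: "\<forall>\<^sub>F x in F. positive_semistable (Mf x)"
  shows "positive_semistable M"
  unfolding positive_semistable_def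
proof (intro conjI allI impI)
  fix z assume ev: "eigenvalue (map_mat complex_of_real M) z"
  show "Re z \<ge> 0"
  proof (rule ccontr)
    assume "\<not> Re z \<ge> 0"
    let ?cm = "\<lambda>A. char_matrix (map_mat complex_of_real A) z"
    have "?cm (Mf x) \<in> carrier_mat k k" "?cm M \<in> carrier_mat k k" for x
      using Mf[of x] M by simp_all
    moreover have "((\<lambda>x. ?cm (Mf x) $$ (i,j)) \<longlongrightarrow> ?cm M $$ (i,j)) F" if "i < k" "j < k" for i j
    proof -
      have "?cm A $$ (i,j) = complex_of_real (A $$ (i,j)) - (if i = j then z else 0)"
        if "A \<in> carrier_mat k k" for A
        using that \<open>i < k\<close> \<open>j < k\<close> unfolding char_matrix_def by auto
      then show ?thesis using Mf M by (simp add: tendsto_intros lim that)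
    qed
    ultimately have "((\<lambda>x. cmod (det (?cm (Mf x)))) \<longlongrightarrow> cmod (det (?cm M))) F"
      by (intro tendsto_norm tendsto_det)
    moreover have "\<forall>\<^sub>F x in F. (- Re z) ^ k \<le> cmod (det (?cm (Mf x)))"
      using stable by eventually_elim
        (use Mf \<open>\<not> Re z \<ge> 0\<close> in \<open>auto simp: positive_semistable_def intro!: norm_det_char_matrix_ge\<close>)
    ultimately have "(- Re z) ^ k \<le> cmod (det (?cm M))" using F by (intro tendsto_lowerbound)
    moreover have "det (?cm M) = 0" using ev eigenvalue_det[of "map_mat complex_of_real M" k] M by simp
    moreover have "(- Re z) ^ k > 0" using \<open>\<not> Re z \<ge> 0\<close> by simp
    ultimately show False by simp
  qed
qed (use M in simp)

section \<open>The second additive compound of a product\<close>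

lemma wedge_pairs_nth:
  assumes "r < length (wedge_pairs n)"
  obtains i j where "wedge_pairs n ! r = (i, j)" "i < j" "j < n"
proof -
  have "wedge_pairs n ! r \<in> set (wedge_pairs n)" using assms by simp
  then show ?thesis using that unfolding wedge_pairs_def by auto
qed

lemma compound2_carrier:
  "M \<in> carrier_mat n n \<Longrightarrow> compound2 M \<in> carrier_mat (length (wedge_pairs n)) (length (wedge_pairs n))"
  unfolding compound2_def Let_def by auto

lemma compound2_index:
  assumes "M \<in> carrier_mat n n" "r < length (wedge_pairs n)" "c < length (wedge_pairs n)"
    "wedge_pairs n ! r = (i, j)" "wedge_pairs n ! c = (k, l)"
  shows "compound2 M $$ (r, c) = (if l = j then M $$ (i,k) else 0) - (if l = i then M $$ (j,k) else 0)
      + (if k = i then M $$ (j,l) else 0) - (if k = j then M $$ (i,l) else 0)"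
  using assms unfolding compound2_def Let_def by simp

lemma tendsto_compound2_index:
  assumes Mf: "\<And>x. Mf x \<in> carrier_mat n n" and M: "M \<in> carrier_mat n n"
    and lim: "\<And>i j. i < n \<Longrightarrow> j < n \<Longrightarrow> ((\<lambda>x. Mf x $$ (i,j)) \<longlongrightarrow> M $$ (i,j)) F"
    and rc: "r < length (wedge_pairs n)" "c < length (wedge_pairs n)"
  shows "((\<lambda>x. compound2 (Mf x) $$ (r,c)) \<longlongrightarrow> compound2 M $$ (r,c)) F"
proof -
  obtain i j where ij: "wedge_pairs n ! r = (i, j)" "i < j" "j < n" using wedge_pairs_nth[OF rc(1)] .
  obtain k l where kl: "wedge_pairs n ! c = (k, l)" "k < l" "l < n" using wedge_pairs_nth[OF rc(2)] .
  have "((\<lambda>x. (if l = j then Mf x $$ (i,k) else 0) - (if l = i then Mf x $$ (j,k) else 0)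
      + (if k = i then Mf x $$ (j,l) else 0) - (if k = j then Mf x $$ (i,l) else 0))
    \<longlongrightarrow> (if l = j then M $$ (i,k) else 0) - (if l = i then M $$ (j,k) else 0)
      + (if k = i then M $$ (j,l) else 0) - (if k = j then M $$ (i,l) else 0)) F"
    using ij kl by (intro tendsto_intros) (auto intro: lim)
  then show ?thesis using compound2_index[OF Mf rc ij(1) kl(1)] compound2_index[OF M rc ij(1) kl(1)] by simp
qed

text \<open>The coefficient of \<open>e\<^sub>i \<and> e\<^sub>j\<close> in \<open>P e\<^sub>p \<and> e\<^sub>q\<close>.\<close>

fun wedge_coeff :: "real mat \<Rightarrow> nat \<times> nat \<Rightarrow> nat \<times> nat \<Rightarrow> real" where
  "wedge_coeff P (i, j) (p, q) = (if q = j then P $$ (i,p) else 0) - (if q = i then P $$ (j,p) else 0)"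

lemma sum_indicator_diff_mult:
  fixes a b c d :: real and n :: nat
  assumes "i < n" "j < n" "k < n" "l < n"
  shows "(\<Sum>q<n. ((if q = j then a else 0) - (if q = i then b else 0)) *
      ((if q = l then c else 0) - (if q = k then d else 0)))
    = (if j = l then a * c else 0) - (if j = k then a * d else 0)
      - (if i = l then b * c else 0) + (if i = k then b * d else 0)"
proof -
  have "((if q = j then a else 0) - (if q = i then b else 0)) *
      ((if q = l then c else 0) - (if q = k then d else 0))
    = (if q = j then (if j = l then a * c else 0) else 0) - (if q = j then (if j = k then a * d else 0) else 0)
      - (if q = i then (if i = l then b * c else 0) else 0) + (if q = i then (if i = k then b * d else 0) else 0)"
    for q
    by (auto simp: algebra_simps)
  moreover have "(\<Sum>q<n. if q = x then y else 0) = (if x < n then y else 0)" for x :: nat and y :: real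
    by simp
  ultimately show ?thesis using assms by (simp add: sum.distrib sum_subtractf del: sum.delta)
qed

lemma wedge_coeff_diag_scaled:
  assumes kl: "k < l" "l < n" and d: "\<And>i. i < n \<Longrightarrow> d i > 0"
    and Q: "\<And>i p. i < n \<Longrightarrow> p < m \<Longrightarrow> Q $$ (p,i) = d i * e p * P $$ (i,p)"
    and pq: "p < m" "q < n"
  shows "wedge_coeff P (k, l) (p, q) * (e p / d q) * (d k * d l)
    = (if q = l then Q $$ (p,k) else 0) - (if q = k then Q $$ (p,l) else 0)"
  using kl pq d[of k] d[of l] Q[of k p] Q[of l p] by (auto simp: field_simps)

lemma mult_eq_weighted_gram:
  assumes P: "P \<in> carrier_mat n m" and Q: "Q \<in> carrier_mat m n"
    and QP: "\<And>i p. i < n \<Longrightarrow> p < m \<Longrightarrow> Q $$ (p,i) = d i * e p * P $$ (i,p)"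
  shows "P * Q = weighted_gram n {..<m} (\<lambda>i p. P $$ (i,p)) e d"
  using P Q by (intro eq_matI)
    (auto simp: mult_mat_index_sum[OF P Q] weighted_gram_def QP mult_ac simp del: index_mult_mat(1) intro!: sum.cong)

lemma compound2_mult_eq_weighted_gram:
  assumes P: "P \<in> carrier_mat n m" and Q: "Q \<in> carrier_mat m n" and d: "\<And>i. i < n \<Longrightarrow> d i > 0"
    and QP: "\<And>i p. i < n \<Longrightarrow> p < m \<Longrightarrow> Q $$ (p,i) = d i * e p * P $$ (i,p)"
  shows "compound2 (P * Q) = weighted_gram (length (wedge_pairs n)) ({..<m} \<times> {..<n})
    (\<lambda>r. wedge_coeff P (wedge_pairs n ! r)) (\<lambda>(p, q). e p / d q)
    (\<lambda>c. d (fst (wedge_pairs n ! c)) * d (snd (wedge_pairs n ! c)))" (is "_ = ?G")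
proof (rule eq_matI)
  have PQ: "P * Q \<in> carrier_mat n n" using P Q by simp
  show "dim_row (compound2 (P * Q)) = dim_row ?G" "dim_col (compound2 (P * Q)) = dim_col ?G"
    using compound2_carrier[OF PQ] by simp_all
  fix r c assume "r < dim_row ?G" "c < dim_col ?G"
  then have rc: "r < length (wedge_pairs n)" "c < length (wedge_pairs n)" by simp_all
  obtain i j where ij: "wedge_pairs n ! r = (i, j)" "i < j" "j < n" using wedge_pairs_nth[OF rc(1)] .
  obtain k l where kl: "wedge_pairs n ! c = (k, l)" "k < l" "l < n" using wedge_pairs_nth[OF rc(2)] .
  have "?G $$ (r, c) = (\<Sum>p<m. \<Sum>q<n. wedge_coeff P (i, j) (p, q) * (wedge_coeff P (k, l) (p, q) * (e p / d q) * (d k * d l)))"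
    using rc ij kl by (subst sum.cartesian_product)
      (simp add: weighted_gram_def split_def mult_ac del: wedge_coeff.simps)
  also have "\<dots> = (\<Sum>p<m. \<Sum>q<n. ((if q = j then P $$ (i,p) else 0) - (if q = i then P $$ (j,p) else 0)) *
      ((if q = l then Q $$ (p,k) else 0) - (if q = k then Q $$ (p,l) else 0)))"
    using wedge_coeff_diag_scaled[OF kl(2,3) d QP] by simp
  also have "\<dots> = (\<Sum>p<m. (if j = l then P $$ (i,p) * Q $$ (p,k) else 0) - (if j = k then P $$ (i,p) * Q $$ (p,l) else 0)
      - (if i = l then P $$ (j,p) * Q $$ (p,k) else 0) + (if i = k then P $$ (j,p) * Q $$ (p,l) else 0))"
    using ij kl by (intro sum.cong refl sum_indicator_diff_mult) auto
  also have "\<dots> = compound2 (P * Q) $$ (r, c)"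
    using ij kl unfolding compound2_index[OF PQ rc ij(1) kl(1)]
    by (cases "j = l"; cases "j = k"; cases "i = l"; cases "i = k")
      (simp_all add: mult_mat_index_sum[OF P Q] sum.distrib sum_subtractf sum_negf)
  finally show "compound2 (P * Q) $$ (r, c) = ?G $$ (r, c)" ..
qed

section \<open>Perturbing into the sign class\<close>

definition diag_scaled_transpose :: "real mat \<Rightarrow> real mat \<Rightarrow> bool" where
  "diag_scaled_transpose Q P \<longleftrightarrow> (\<exists>d e. (\<forall>i<dim_row P. d i > 0) \<and> (\<forall>p<dim_col P. e p > 0) \<and>
     (\<forall>i<dim_row P. \<forall>p<dim_col P. Q $$ (p,i) = d i * e p * P $$ (i,p)))"

lemma diag_scaled_transpose_mult:
  assumes P: "P \<in> carrier_mat n m" and Q: "Q \<in> carrier_mat m n" and PQ: "diag_scaled_transpose Q P"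
  shows "P0_matrix (P * Q) \<and> positive_semistable (P * Q) \<and> P0_matrix (compound2 (P * Q))"
proof -
  have "dim_row P = n" "dim_col P = m" using P by auto
  with PQ obtain d e where d_pos: "\<forall>i<n. d i > 0" and e_pos: "\<forall>p<m. e p > 0"
    and QP_all: "\<forall>i<n. \<forall>p<m. Q $$ (p,i) = d i * e p * P $$ (i,p)"
    unfolding diag_scaled_transpose_def by blast
  have d: "\<And>i. i < n \<Longrightarrow> d i > 0" using d_pos by blast
  have e: "\<And>p. p \<in> {..<m} \<Longrightarrow> e p \<ge> 0" using e_pos by (simp add: less_imp_le)
  have QP: "\<And>i p. i < n \<Longrightarrow> p < m \<Longrightarrow> Q $$ (p,i) = d i * e p * P $$ (i,p)" using QP_all by blast
  have w: "\<And>x. x \<in> {..<m} \<times> {..<n} \<Longrightarrow> (case x of (p, q) \<Rightarrow> e p / d q) \<ge> 0"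
    using d e by (auto intro!: divide_nonneg_pos)
  have dd: "d (fst (wedge_pairs n ! c)) * d (snd (wedge_pairs n ! c)) > 0"
    if c: "c < length (wedge_pairs n)" for c
  proof -
    obtain i j where "wedge_pairs n ! c = (i, j)" "i < j" "j < n" using wedge_pairs_nth[OF c] .
    then show ?thesis using d[of i] d[of j] by simp
  qed
  have gram: "P * Q = weighted_gram n {..<m} (\<lambda>i p. P $$ (i,p)) e d"
    by (rule mult_eq_weighted_gram[OF P Q QP])
  have compound_gram: "compound2 (P * Q) = weighted_gram (length (wedge_pairs n)) ({..<m} \<times> {..<n})
      (\<lambda>r. wedge_coeff P (wedge_pairs n ! r)) (\<lambda>(p, q). e p / d q)
      (\<lambda>c. d (fst (wedge_pairs n ! c)) * d (snd (wedge_pairs n ! c)))"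
    by (rule compound2_mult_eq_weighted_gram[OF P Q d QP])
  have "P0_matrix (P * Q)" unfolding gram by (rule P0_matrix_weighted_gram[OF e d])
  moreover have "positive_semistable (P * Q)" unfolding gram by (rule positive_semistable_weighted_gram[OF e d])
  moreover have "P0_matrix (compound2 (P * Q))" unfolding compound_gram by (rule P0_matrix_weighted_gram[OF w dd])
  ultimately show ?thesis by blast
qed

lemma Q0_carrier: "C \<in> carrier_mat n m \<Longrightarrow> A \<in> Q0 C \<Longrightarrow> A \<in> carrier_mat n m"
  unfolding Q0_def by auto

lemma Q0_add_smult_sgn:
  assumes A: "A \<in> Q0 C" and \<epsilon>: "\<epsilon> > 0" and ij: "i < dim_row C" "j < dim_col C"
  shows "sgn ((A + \<epsilon> \<cdot>\<^sub>m C) $$ (i,j)) = sgn (C $$ (i,j))"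
proof -
  have "sgn (A $$ (i,j)) \<in> {0, sgn (C $$ (i,j))}" and "A \<in> carrier_mat (dim_row C) (dim_col C)"
    using A ij unfolding Q0_def by auto
  moreover have "C $$ (i,j) > 0 \<Longrightarrow> \<epsilon> * C $$ (i,j) > 0" "C $$ (i,j) < 0 \<Longrightarrow> \<epsilon> * C $$ (i,j) < 0"
    using \<epsilon> by (simp_all add: mult_pos_neg)
  ultimately show ?thesis using ij by (auto simp: sgn_if split: if_splits)
qed

lemma tendsto_add_smult_mat_index:
  assumes "A \<in> carrier_mat n m" "C \<in> carrier_mat n m" "i < n" "j < m"
  shows "((\<lambda>\<epsilon>. (A + \<epsilon> \<cdot>\<^sub>m C) $$ (i,j)) \<longlongrightarrow> A $$ (i,j)) (at (0::real) within S)"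
proof -
  have "((\<lambda>\<epsilon>. A $$ (i,j) + \<epsilon> * C $$ (i,j)) \<longlongrightarrow> A $$ (i,j) + 0 * C $$ (i,j)) (at (0::real) within S)"
    by (intro tendsto_intros)
  then show ?thesis using assms by simp
qed

lemma Q0_perturbation_diag_scaled_transpose:
  assumes C: "C \<in> carrier_mat n m" and acyc: "dsr_acyclic C"
    and A: "A \<in> Q0 C" and B: "B \<in> Q0 (transpose_mat C)" and \<epsilon>: "\<epsilon> > 0"
  shows "diag_scaled_transpose (B + \<epsilon> \<cdot>\<^sub>m transpose_mat C) (A + \<epsilon> \<cdot>\<^sub>m C)"
proof -
  let ?P = "A + \<epsilon> \<cdot>\<^sub>m C" and ?Q = "B + \<epsilon> \<cdot>\<^sub>m transpose_mat C"
  have "sgn (?P $$ (i,j)) = sgn (C $$ (i,j)) \<and> sgn (?Q $$ (j,i)) = sgn (C $$ (i,j))" if "i < n" "j < m" for i j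
    using Q0_add_smult_sgn[OF A \<epsilon>, of i j] Q0_add_smult_sgn[OF B \<epsilon>, of j i] that C by simp
  then obtain d e where "\<forall>i<n. d i > 0" "\<forall>j<m. e j > 0" "\<forall>i<n. \<forall>j<m. ?Q $$ (j,i) = d i * e j * ?P $$ (i,j)"
    using dsr_acyclic_diagonal_scaling[OF C acyc] by blast
  moreover have "dim_row ?P = n" "dim_col ?P = m" using Q0_carrier[OF C A] C by auto
  ultimately show ?thesis unfolding diag_scaled_transpose_def by metis
qed

theorem theorem6p3:
  fixes C :: "real mat" and n m :: nat
  assumes "C \<in> carrier_mat n m" and "n \<ge> 2" and "dsr_acyclic C"
  shows "\<forall>A \<in> Q0 C. \<forall>B \<in> Q0 (transpose_mat C).
           P0_matrix (A * B) \<and> P0_matrix (compound2 (A * B)) \<and> positive_semistable (A * B)"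
proof (intro ballI)
  fix A B assume A: "A \<in> Q0 C" and B: "B \<in> Q0 (transpose_mat C)"
  note C = assms(1)
  have A_carrier: "A \<in> carrier_mat n m" and B_carrier: "B \<in> carrier_mat m n"
    using Q0_carrier[OF C A] Q0_carrier[OF _ B] C by auto
  have perturbed_carrier: "A + \<epsilon> \<cdot>\<^sub>m C \<in> carrier_mat n m" "B + \<epsilon> \<cdot>\<^sub>m transpose_mat C \<in> carrier_mat m n"
    for \<epsilon> using A_carrier B_carrier C by auto
  define M where "M \<epsilon> = (A + \<epsilon> \<cdot>\<^sub>m C) * (B + \<epsilon> \<cdot>\<^sub>m transpose_mat C)" for \<epsilon> :: real
  have M_carrier: "M \<epsilon> \<in> carrier_mat n n" for \<epsilon>
    using perturbed_carrier unfolding M_def by (rule mult_carrier_mat)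
  have AB_carrier: "A * B \<in> carrier_mat n n" using A_carrier B_carrier by simp
  have M_lim: "((\<lambda>\<epsilon>. M \<epsilon> $$ (i,j)) \<longlongrightarrow> (A * B) $$ (i,j)) (at_right 0)" if "i < n" "j < n" for i j
    unfolding M_def using A_carrier B_carrier C that
    by (intro tendsto_mult_mat_index tendsto_add_smult_mat_index) auto
  have "\<forall>\<^sub>F \<epsilon> in at_right 0. P0_matrix (M \<epsilon>) \<and> positive_semistable (M \<epsilon>) \<and> P0_matrix (compound2 (M \<epsilon>))"
    using eventually_at_right_less[of 0] unfolding M_def
    by eventually_elim (use diag_scaled_transpose_mult[OF perturbed_carrier
      Q0_perturbation_diag_scaled_transpose[OF C assms(3) A B]] in blast)
  then have "\<forall>\<^sub>F \<epsilon> in at_right 0. P0_matrix (M \<epsilon>)" "\<forall>\<^sub>F \<epsilon> in at_right 0. positive_semistable (M \<epsilon>)"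
    "\<forall>\<^sub>F \<epsilon> in at_right 0. P0_matrix (compound2 (M \<epsilon>))"
    by (auto elim: eventually_mono)
  then show "P0_matrix (A * B) \<and> P0_matrix (compound2 (A * B)) \<and> positive_semistable (A * B)"
    using P0_matrix_limit[OF _ M_carrier AB_carrier M_lim]
      positive_semistable_limit[OF _ M_carrier AB_carrier M_lim]
      P0_matrix_limit[OF _ compound2_carrier[OF M_carrier] compound2_carrier[OF AB_carrier]
        tendsto_compound2_index[OF M_carrier AB_carrier M_lim]]
    by simp
qed

end
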